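(* Let $p,q$ be distributions on $[n]$ and $m_1,m_2>0$. Let $X_i\sim\mathrm{Poisson}(m_1p_i)$ and $Y_i\sim\mathrm{Poisson}(m_2q_i)$, $i\in[n]$, all mutually independent. For any fixed set $A\subseteq[n]$, let $V_A=\sum_{i\in A}\left|\frac{X_i}{m_1}-\frac{Y_i}{m_2}\right|$. Then $$\sum_{i\in A}|p_i-q_i|\leq\mathbb E[V_A]\leq\sum_{i\in A}|p_i-q_i|+\left(\frac{|A|}{m_1}+\frac{|A|}{m_2}\right)^{1/2}\leq\sum_{i\in A}|p_i-q_i|+\left(\frac{2|A|}{m_2}\right)^{1/2},$$ and $\mathrm{Var}[V_A]\leq\frac{1}{m_1}+\frac{1}{m_2}$.
   Context: The last inequality in the chain of expectation bounds presumes $m_1\geq m_2$, as in the paper's setting where the sample from $p$ is the larger one. *)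

theory Defs
  imports "HOL-Probability.Probability"
begin

text \<open>Poisson distribution with rate r >= 0; rate 0 is the point mass at 0
  (the library's poisson_pmf is only specified for rates > 0).\<close>
definition poisson :: "real \<Rightarrow> nat pmf" where
  "poisson r = (if r = 0 then return_pmf 0 else poisson_pmf r)"

end

theory Submission
  imports Defs
begin

text \<open>Each coordinate Z_i = X_i/m1 - Y_i/m2 has mean p_i - q_i and, because a Poisson
  variable has variance equal to its mean, variance v_i = p_i/m1 + q_i/m2. Hence
  |E Z_i| \<le> E|Z_i| \<le> sqrt (E Z_i^2) \<le> |E Z_i| + sqrt v_i and Var |Z_i| \<le> v_i. Summing over A,
  Cauchy-Schwarz bounds the sum of the sqrt v_i by sqrt (|A| * sum of the v_i), and since the
  |Z_i| are independent, Var V_A is the sum of the Var |Z_i|. Finally the v_i sum to at most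
  1/m1 + 1/m2 because p and q are probability vectors.\<close>

lemma sums_exp_series: "(\<lambda>k. r ^ k / fact k) sums exp (r::real)"
  using exp_converges[of r] by (simp add: divide_inverse mult.commute)

lemma sums_nat_mult_exp_series: "(\<lambda>k. real k * (r ^ k / fact k)) sums (r * exp (r::real))"
proof -
  have "(\<lambda>k. r * (r ^ k / fact k)) sums (r * exp r)"
    by (rule sums_mult[OF sums_exp_series])
  also have "(\<lambda>k. r * (r ^ k / fact k)) = (\<lambda>k. real (Suc k) * (r ^ Suc k / fact (Suc k)))"
  proof
    fix k
    have "fact (Suc k) = real (Suc k) * (fact k :: real)" by simp
    then show "r * (r ^ k / fact k) = real (Suc k) * (r ^ Suc k / fact (Suc k))"
      by (simp del: of_nat_Suc fact_Suc)
  qed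
  finally show ?thesis by (subst (asm) sums_Suc_iff) simp
qed

lemma sums_nat_square_mult_exp_series:
  "(\<lambda>k. (real k)\<^sup>2 * (r ^ k / fact k)) sums ((r\<^sup>2 + r) * exp (r::real))"
proof -
  have "(\<lambda>k. r * (real k * (r ^ k / fact k) + r ^ k / fact k)) sums (r * (r * exp r + exp r))"
    by (rule sums_mult[OF sums_add[OF sums_nat_mult_exp_series sums_exp_series]])
  also have "(\<lambda>k. r * (real k * (r ^ k / fact k) + r ^ k / fact k))
      = (\<lambda>k. (real (Suc k))\<^sup>2 * (r ^ Suc k / fact (Suc k)))"
  proof
    fix k
    have "fact (Suc k) = real (Suc k) * (fact k :: real)" by simp
    then show "r * (real k * (r ^ k / fact k) + r ^ k / fact k)
        = (real (Suc k))\<^sup>2 * (r ^ Suc k / fact (Suc k))"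
      by (simp del: of_nat_Suc fact_Suc add: power2_eq_square field_simps) (simp add: algebra_simps)
  qed
  finally show ?thesis by (subst (asm) sums_Suc_iff) (simp add: algebra_simps power2_eq_square)
qed

lemma poisson_moments:
  assumes "0 \<le> r"
  shows "integrable (measure_pmf (poisson r)) real"
    and "integrable (measure_pmf (poisson r)) (\<lambda>k. (real k)\<^sup>2)"
    and "(\<integral>k. real k \<partial>measure_pmf (poisson r)) = r"
    and "(\<integral>k. (real k)\<^sup>2 \<partial>measure_pmf (poisson r)) = r + r\<^sup>2"
proof -
  have "integrable (measure_pmf (poisson r)) real \<and>
      integrable (measure_pmf (poisson r)) (\<lambda>k. (real k)\<^sup>2) \<and>
      (\<integral>k. real k \<partial>measure_pmf (poisson r)) = r \<and>
      (\<integral>k. (real k)\<^sup>2 \<partial>measure_pmf (poisson r)) = r + r\<^sup>2"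
  proof (cases "r = 0")
    case True
    then show ?thesis by (simp add: poisson_def integrable_measure_pmf_finite)
  next
    case False
    with assms have r: "0 < r" by simp
    have density: "measure_pmf (poisson r) = density (count_space UNIV) (\<lambda>k. r ^ k / fact k * exp (-r))"
      using r by (simp add: poisson_def measure_pmf_eq_density)
    have "(\<lambda>k. real k * (r ^ k / fact k) * exp (-r)) sums (r * exp r * exp (-r))"
      by (rule sums_mult2[OF sums_nat_mult_exp_series])
    also have "r * exp r * exp (-r) = r" by (simp add: mult.assoc exp_minus_inverse)
    finally have s1: "(\<lambda>k. r ^ k / fact k * exp (-r) * real k) sums r"
      by (simp add: ac_simps)
    have "(\<lambda>k. (real k)\<^sup>2 * (r ^ k / fact k) * exp (-r)) sums ((r\<^sup>2 + r) * exp r * exp (-r))"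
      by (rule sums_mult2[OF sums_nat_square_mult_exp_series])
    also have "(r\<^sup>2 + r) * exp r * exp (-r) = r + r\<^sup>2" by (simp add: mult.assoc exp_minus_inverse)
    finally have s2: "(\<lambda>k. r ^ k / fact k * exp (-r) * (real k)\<^sup>2) sums (r + r\<^sup>2)"
      by (simp add: ac_simps)
    have "integrable (count_space UNIV) (\<lambda>k. r ^ k / fact k * exp (-r) * real k)"
      "integrable (count_space UNIV) (\<lambda>k. r ^ k / fact k * exp (-r) * (real k)\<^sup>2)"
      using s1 s2 r by (simp_all add: integrable_count_space_nat_iff sums_summable)
    then show ?thesis
      unfolding density using r sums_unique[OF s1, symmetric] sums_unique[OF s2, symmetric]
      by (simp add: integrable_density integral_density integral_count_space_nat)
  qed
  then show "integrable (measure_pmf (poisson r)) real"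
    and "integrable (measure_pmf (poisson r)) (\<lambda>k. (real k)\<^sup>2)"
    and "(\<integral>k. real k \<partial>measure_pmf (poisson r)) = r"
    and "(\<integral>k. (real k)\<^sup>2 \<partial>measure_pmf (poisson r)) = r + r\<^sup>2" by auto
qed

lemma (in prob_space) poisson_distributed_moments:
  assumes X: "X \<in> measurable M (count_space UNIV)"
    and distr_X: "distr M (count_space UNIV) X = measure_pmf (poisson r)"
    and "0 \<le> r"
  shows "integrable M (\<lambda>\<omega>. real (X \<omega>))" "integrable M (\<lambda>\<omega>. (real (X \<omega>))\<^sup>2)"
    and "expectation (\<lambda>\<omega>. real (X \<omega>)) = r" "variance (\<lambda>\<omega>. real (X \<omega>)) = r"
proof -
  have transfer: "integrable M (\<lambda>\<omega>. f (X \<omega>)) \<longleftrightarrow> integrable (measure_pmf (poisson r)) f"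
    "expectation (\<lambda>\<omega>. f (X \<omega>)) = (\<integral>k. f k \<partial>measure_pmf (poisson r))" for f :: "nat \<Rightarrow> real"
    using integrable_distr_eq[OF X, of f] integral_distr[OF X, of f] distr_X by simp_all
  show int: "integrable M (\<lambda>\<omega>. real (X \<omega>))" "integrable M (\<lambda>\<omega>. (real (X \<omega>))\<^sup>2)"
    and mean: "expectation (\<lambda>\<omega>. real (X \<omega>)) = r"
    using poisson_moments[OF \<open>0 \<le> r\<close>] transfer[of real] transfer[of "\<lambda>k. (real k)\<^sup>2"]
    by simp_all
  have "expectation (\<lambda>\<omega>. (real (X \<omega>))\<^sup>2) = r + r\<^sup>2"
    using poisson_moments[OF \<open>0 \<le> r\<close>] transfer[of "\<lambda>k. (real k)\<^sup>2"] by simp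
  then show "variance (\<lambda>\<omega>. real (X \<omega>)) = r"
    using variance_eq[OF int] mean by simp
qed

lemma (in prob_space) variance_scale:
  fixes X :: "'a \<Rightarrow> real"
  assumes "integrable M X"
  shows "variance (\<lambda>\<omega>. c * X \<omega>) = c\<^sup>2 * variance X"
  using assms by (simp add: right_diff_distrib[symmetric] power_mult_distrib)

lemma (in prob_space) indep_var_compose_restrict:
  assumes "indep_vars M' F I" "J \<inter> K = {}" "J \<subseteq> I" "K \<subseteq> I"
    and "g \<in> measurable (PiM J M') N" "h \<in> measurable (PiM K M') N'"
  shows "indep_var N (\<lambda>\<omega>. g (restrict (\<lambda>k. F k \<omega>) J)) N' (\<lambda>\<omega>. h (restrict (\<lambda>k. F k \<omega>) K))"
  using indep_var_compose[OF indep_var_restrict[OF assms(1-4)] assms(5,6)] by (simp add: comp_def)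

lemma (in prob_space) indep_var_pairs_compose:
  assumes indep: "indep_vars (\<lambda>_. N) (\<lambda>k. case k of Inl i \<Rightarrow> X i | Inr i \<Rightarrow> Y i) (Inl ` I \<union> Inr ` I)"
    and "i \<in> I" "j \<in> I" "i \<noteq> j"
    and g: "(\<lambda>(x, y). g x y) \<in> N \<Otimes>\<^sub>M N \<rightarrow>\<^sub>M K"
  shows "indep_var K (\<lambda>\<omega>. g (X i \<omega>) (Y i \<omega>)) K (\<lambda>\<omega>. g (X j \<omega>) (Y j \<omega>))"
proof -
  define F where "F = (\<lambda>k. case k of Inl i \<Rightarrow> X i | Inr i \<Rightarrow> Y i)"
  have pair: "(\<lambda>f. (f (Inl k), f (Inr k))) \<in> PiM {Inl k, Inr k} (\<lambda>_. N) \<rightarrow>\<^sub>M N \<Otimes>\<^sub>M N" for k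
    by (intro measurable_Pair measurable_component_singleton) auto
  have "(\<lambda>f. g (f (Inl k)) (f (Inr k))) \<in> PiM {Inl k, Inr k} (\<lambda>_. N) \<rightarrow>\<^sub>M K" for k
    using measurable_compose[OF pair g] by simp
  then have "indep_var
      K (\<lambda>\<omega>. (\<lambda>f. g (f (Inl i)) (f (Inr i))) (\<lambda>k\<in>{Inl i, Inr i}. F k \<omega>))
      K (\<lambda>\<omega>. (\<lambda>f. g (f (Inl j)) (f (Inr j))) (\<lambda>k\<in>{Inl j, Inr j}. F k \<omega>))"
    unfolding F_def by (intro indep_var_compose_restrict[OF indep]) (use assms(2-4) in auto)
  then show ?thesis by (simp add: F_def)
qed

lemma (in prob_space) indep_var_Inl_Inr:
  assumes indep: "indep_vars (\<lambda>_. N) (\<lambda>k. case k of Inl i \<Rightarrow> X i | Inr i \<Rightarrow> Y i) (Inl ` I \<union> Inr ` I)"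
    and "i \<in> I"
  shows "indep_var N (X i) N (Y i)"
  using indep_var_compose_restrict[OF indep, of "{Inl i}" "{Inr i}" "\<lambda>f. f (Inl i)" N "\<lambda>f. f (Inr i)" N]
    assms(2) by simp

lemma (in prob_space) indep_var_commute: "indep_var S X T Y \<longleftrightarrow> indep_var T Y S X"
  unfolding indep_var_eq indep_sets2_eq by (metis (no_types, lifting) Int_commute mult.commute)

lemma (in prob_space) variance_sum_pairwise_indep:
  fixes F :: "'i \<Rightarrow> 'a \<Rightarrow> real"
  assumes "finite I"
    and int: "\<And>i. i \<in> I \<Longrightarrow> integrable M (F i)"
    and int2: "\<And>i. i \<in> I \<Longrightarrow> integrable M (\<lambda>\<omega>. (F i \<omega>)\<^sup>2)"
    and indep: "\<And>i j. i \<in> I \<Longrightarrow> j \<in> I \<Longrightarrow> i \<noteq> j \<Longrightarrow> indep_var borel (F i) borel (F j)"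
  shows "integrable M (\<lambda>\<omega>. (\<Sum>i\<in>I. F i \<omega>)\<^sup>2)"
    and "variance (\<lambda>\<omega>. \<Sum>i\<in>I. F i \<omega>) = (\<Sum>i\<in>I. variance (F i))"
proof -
  have "integrable M (\<lambda>\<omega>. F i \<omega> * F j \<omega>)" if "i \<in> I" "j \<in> I" for i j
    using int2[OF that(1)] indep_var_integrable[OF indep[OF that] int[OF that(1)] int[OF that(2)]]
    by (cases "i = j") (simp_all add: power2_eq_square)
  then show "integrable M (\<lambda>\<omega>. (\<Sum>i\<in>I. F i \<omega>)\<^sup>2)"
    by (simp add: power2_eq_square sum_product)
  define D where "D = (\<lambda>i \<omega>. F i \<omega> - expectation (F i))"
  have covariance: "integrable M (\<lambda>\<omega>. D i \<omega> * D j \<omega>) \<and>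
      expectation (\<lambda>\<omega>. D i \<omega> * D j \<omega>) = (if i = j then variance (F i) else 0)"
    if "i \<in> I" "j \<in> I" for i j
  proof (cases "i = j")
    case True
    have "(\<lambda>\<omega>. D i \<omega> * D j \<omega>)
        = (\<lambda>\<omega>. (F i \<omega>)\<^sup>2 - 2 * expectation (F i) * F i \<omega> + (expectation (F i))\<^sup>2)"
      using True by (simp add: D_def fun_eq_iff power2_eq_square algebra_simps)
    then have "integrable M (\<lambda>\<omega>. D i \<omega> * D j \<omega>)"
      using int int2 that by simp
    then show ?thesis using True by (simp add: D_def power2_eq_square)
  next
    case False
    have ind: "indep_var borel (D i) borel (D j)"
      using indep_var_compose[OF indep[OF that False],
          of "\<lambda>x. x - expectation (F i)" borel "\<lambda>x. x - expectation (F j)" borel]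
      by (simp add: D_def comp_def)
    have "integrable M (D i)" "integrable M (D j)" "expectation (D i) = 0"
      using int that by (simp_all add: D_def prob_space)
    then show ?thesis
      using indep_var_lebesgue_integral[OF ind] indep_var_integrable[OF ind] False by simp
  qed
  have "expectation (\<lambda>\<omega>. \<Sum>i\<in>I. F i \<omega>) = (\<Sum>i\<in>I. expectation (F i))"
    using int by (simp add: Bochner_Integration.integral_sum)
  moreover have "(\<Sum>i\<in>I. F i \<omega>) - (\<Sum>i\<in>I. expectation (F i)) = (\<Sum>i\<in>I. D i \<omega>)" for \<omega>
    by (simp add: D_def sum_subtractf)
  ultimately have "variance (\<lambda>\<omega>. \<Sum>i\<in>I. F i \<omega>) = expectation (\<lambda>\<omega>. \<Sum>i\<in>I. \<Sum>j\<in>I. D i \<omega> * D j \<omega>)"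
    by (simp add: power2_eq_square sum_product)
  also have "\<dots> = (\<Sum>i\<in>I. \<Sum>j\<in>I. expectation (\<lambda>\<omega>. D i \<omega> * D j \<omega>))"
    using covariance by (simp add: Bochner_Integration.integral_sum integrable_sum)
  also have "\<dots> = (\<Sum>i\<in>I. variance (F i))"
    by (rule sum.cong) (auto simp: covariance \<open>finite I\<close> sum.delta)
  finally show "variance (\<lambda>\<omega>. \<Sum>i\<in>I. F i \<omega>) = (\<Sum>i\<in>I. variance (F i))" .
qed

lemma (in prob_space) scaled_difference_of_indep_poissons:
  fixes X Y :: "'a \<Rightarrow> nat" and a b :: real
  assumes indep: "indep_var (count_space UNIV) X (count_space UNIV) Y"
    and distr_X: "distr M (count_space UNIV) X = measure_pmf (poisson r)" and "0 \<le> r"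
    and distr_Y: "distr M (count_space UNIV) Y = measure_pmf (poisson s)" and "0 \<le> s"
  defines "Z \<equiv> \<lambda>\<omega>. real (X \<omega>) / a - real (Y \<omega>) / b"
  shows "integrable M Z" "integrable M (\<lambda>\<omega>. (Z \<omega>)\<^sup>2)"
    and "expectation Z = r / a - s / b" "variance Z = r / a\<^sup>2 + s / b\<^sup>2"
proof -
  note X = poisson_distributed_moments[OF indep_var_rv1[OF indep] distr_X \<open>0 \<le> r\<close>]
  note Y = poisson_distributed_moments[OF indep_var_rv2[OF indep] distr_Y \<open>0 \<le> s\<close>]
  define F where "F = (\<lambda>t \<omega>. if t then real (X \<omega>) / a else - real (Y \<omega>) / b)"
  have Z_eq: "Z = (\<lambda>\<omega>. \<Sum>t\<in>UNIV. F t \<omega>)"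
    by (simp add: Z_def F_def UNIV_bool fun_eq_iff)
  have F_int: "integrable M (F t)" "integrable M (\<lambda>\<omega>. (F t \<omega>)\<^sup>2)" for t
    using X Y by (cases t; simp add: F_def power_divide)+
  have "indep_var borel (\<lambda>\<omega>. real (X \<omega>) / a) borel (\<lambda>\<omega>. - real (Y \<omega>) / b)"
    using indep_var_compose[OF indep, of "\<lambda>k. real k / a" borel "\<lambda>k. - real k / b" borel]
    by (simp add: comp_def)
  then have F_indep: "indep_var borel (F t) borel (F u)" if "t \<noteq> u" for t u
    using that indep_var_commute by (cases t; cases u) (auto simp: F_def)
  note sum_F = variance_sum_pairwise_indep[of UNIV F, OF _ F_int F_indep]
  show "integrable M Z" "expectation Z = r / a - s / b"
    using X Y by (simp_all add: Z_def)
  show "integrable M (\<lambda>\<omega>. (Z \<omega>)\<^sup>2)"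
    unfolding Z_eq using sum_F by simp
  have "variance Z = variance (F True) + variance (F False)"
    unfolding Z_eq using sum_F by (simp add: UNIV_bool)
  also have "\<dots> = r / a\<^sup>2 + s / b\<^sup>2"
    using variance_scale[OF X(1), of "1 / a"] variance_scale[OF Y(1), of "- 1 / b"] X(4) Y(4)
    by (simp add: F_def power_divide)
  finally show "variance Z = r / a\<^sup>2 + s / b\<^sup>2" .
qed

lemma (in prob_space) expectation_abs_le_abs_expectation_add_sqrt_variance:
  fixes Z :: "'a \<Rightarrow> real"
  assumes "integrable M Z" "integrable M (\<lambda>\<omega>. (Z \<omega>)\<^sup>2)"
  shows "expectation (\<lambda>\<omega>. \<bar>Z \<omega>\<bar>) \<le> \<bar>expectation Z\<bar> + sqrt (variance Z)"
proof (rule power2_le_imp_le)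
  have "(expectation (\<lambda>\<omega>. \<bar>Z \<omega>\<bar>))\<^sup>2 \<le> expectation (\<lambda>\<omega>. (Z \<omega>)\<^sup>2)"
    using variance_positive[of "\<lambda>\<omega>. \<bar>Z \<omega>\<bar>"] variance_eq[of "\<lambda>\<omega>. \<bar>Z \<omega>\<bar>"] assms by simp
  also have "\<dots> = (expectation Z)\<^sup>2 + variance Z"
    using variance_eq[OF assms] by simp
  also have "\<dots> \<le> (\<bar>expectation Z\<bar> + sqrt (variance Z))\<^sup>2"
    using variance_positive[of Z] by (simp add: power2_sum)
  finally show "(expectation (\<lambda>\<omega>. \<bar>Z \<omega>\<bar>))\<^sup>2 \<le> (\<bar>expectation Z\<bar> + sqrt (variance Z))\<^sup>2" .
qed simp

lemma (in prob_space) variance_abs_le_variance: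
  fixes Z :: "'a \<Rightarrow> real"
  assumes "integrable M Z" "integrable M (\<lambda>\<omega>. (Z \<omega>)\<^sup>2)"
  shows "variance (\<lambda>\<omega>. \<bar>Z \<omega>\<bar>) \<le> variance Z"
proof -
  have "\<bar>expectation Z\<bar>\<^sup>2 \<le> (expectation (\<lambda>\<omega>. \<bar>Z \<omega>\<bar>))\<^sup>2"
    by (rule power_mono) simp_all
  then show ?thesis
    using variance_eq[OF assms] variance_eq[of "\<lambda>\<omega>. \<bar>Z \<omega>\<bar>"] assms by simp
qed

lemma sum_sqrt_le_sqrt_card_mult_sum:
  fixes v :: "'i \<Rightarrow> real"
  assumes "\<And>i. i \<in> A \<Longrightarrow> 0 \<le> v i"
  shows "(\<Sum>i\<in>A. sqrt (v i)) \<le> sqrt (card A * (\<Sum>i\<in>A. v i))"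
proof (rule real_le_rsqrt)
  have "(\<Sum>i\<in>A. sqrt (v i))\<^sup>2 \<le> (\<Sum>i\<in>A. (sqrt (v i))\<^sup>2) * card A"
    by (rule sum_squared_le_sum_of_squares)
  also have "\<dots> = card A * (\<Sum>i\<in>A. v i)"
    using assms by (simp add: mult.commute)
  finally show "(\<Sum>i\<in>A. sqrt (v i))\<^sup>2 \<le> card A * (\<Sum>i\<in>A. v i)" .
qed

lemma sum_subset_le_one:
  fixes p :: "nat \<Rightarrow> real"
  assumes "\<And>i. i < n \<Longrightarrow> 0 \<le> p i" "(\<Sum>i<n. p i) = 1" "A \<subseteq> {..<n}"
  shows "(\<Sum>i\<in>A. p i) \<le> 1"
  using sum_mono2[OF finite_lessThan assms(3), of p] assms(1,2) by auto

lemma (in prob_space) sum_abs_indep_bounds: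
  fixes Z :: "'i \<Rightarrow> 'a \<Rightarrow> real"
  assumes "finite A"
    and int: "\<And>i. i \<in> A \<Longrightarrow> integrable M (Z i)"
    and int2: "\<And>i. i \<in> A \<Longrightarrow> integrable M (\<lambda>\<omega>. (Z i \<omega>)\<^sup>2)"
    and indep: "\<And>i j. i \<in> A \<Longrightarrow> j \<in> A \<Longrightarrow> i \<noteq> j \<Longrightarrow>
      indep_var borel (\<lambda>\<omega>. \<bar>Z i \<omega>\<bar>) borel (\<lambda>\<omega>. \<bar>Z j \<omega>\<bar>)"
  defines "V \<equiv> \<lambda>\<omega>. \<Sum>i\<in>A. \<bar>Z i \<omega>\<bar>"
  shows "(\<Sum>i\<in>A. \<bar>expectation (Z i)\<bar>) \<le> expectation V"
    and "expectation V \<le> (\<Sum>i\<in>A. \<bar>expectation (Z i)\<bar>) + sqrt (card A * (\<Sum>i\<in>A. variance (Z i)))"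
    and "variance V \<le> (\<Sum>i\<in>A. variance (Z i))"
proof -
  have EV: "expectation V = (\<Sum>i\<in>A. expectation (\<lambda>\<omega>. \<bar>Z i \<omega>\<bar>))"
    using int by (simp add: V_def Bochner_Integration.integral_sum)
  show "(\<Sum>i\<in>A. \<bar>expectation (Z i)\<bar>) \<le> expectation V"
    unfolding EV by (rule sum_mono) simp
  have "expectation V \<le> (\<Sum>i\<in>A. \<bar>expectation (Z i)\<bar> + sqrt (variance (Z i)))"
    unfolding EV using int int2
    by (intro sum_mono expectation_abs_le_abs_expectation_add_sqrt_variance)
  also have "\<dots> \<le> (\<Sum>i\<in>A. \<bar>expectation (Z i)\<bar>) + sqrt (card A * (\<Sum>i\<in>A. variance (Z i)))"
    using sum_sqrt_le_sqrt_card_mult_sum[of A "\<lambda>i. variance (Z i)"] variance_positive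
    by (simp add: sum.distrib)
  finally show "expectation V
      \<le> (\<Sum>i\<in>A. \<bar>expectation (Z i)\<bar>) + sqrt (card A * (\<Sum>i\<in>A. variance (Z i)))" .
  have "variance V = (\<Sum>i\<in>A. variance (\<lambda>\<omega>. \<bar>Z i \<omega>\<bar>))"
    unfolding V_def using \<open>finite A\<close> int int2 indep by (intro variance_sum_pairwise_indep(2)) simp_all
  also have "\<dots> \<le> (\<Sum>i\<in>A. variance (Z i))"
    using int int2 by (intro sum_mono variance_abs_le_variance)
  finally show "variance V \<le> (\<Sum>i\<in>A. variance (Z i))" .
qed

theorem lemma1:
  fixes M :: "'a measure" and n :: nat
    and p q :: "nat \<Rightarrow> real" and m1 m2 :: real
    and X Y :: "nat \<Rightarrow> 'a \<Rightarrow> nat" and A :: "nat set"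
  assumes M: "prob_space M"
    and p_nonneg: "\<And>i. i < n \<Longrightarrow> 0 \<le> p i" and p_sum: "(\<Sum>i<n. p i) = 1"
    and q_nonneg: "\<And>i. i < n \<Longrightarrow> 0 \<le> q i" and q_sum: "(\<Sum>i<n. q i) = 1"
    and m1: "0 < m1" and m2: "0 < m2" and m12: "m2 \<le> m1"
    and X_meas: "\<And>i. i < n \<Longrightarrow> X i \<in> measurable M (count_space UNIV)"
    and Y_meas: "\<And>i. i < n \<Longrightarrow> Y i \<in> measurable M (count_space UNIV)"
    and X_distr: "\<And>i. i < n \<Longrightarrow> distr M (count_space UNIV) (X i) = measure_pmf (poisson (m1 * p i))"
    and Y_distr: "\<And>i. i < n \<Longrightarrow> distr M (count_space UNIV) (Y i) = measure_pmf (poisson (m2 * q i))"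
    and indep: "prob_space.indep_vars M (\<lambda>_. count_space UNIV)
                  (\<lambda>k. case k of Inl i \<Rightarrow> X i | Inr i \<Rightarrow> Y i)
                  (Inl ` {..<n} \<union> Inr ` {..<n})"
    and A: "A \<subseteq> {..<n}"
  defines "V \<equiv> (\<lambda>\<omega>. \<Sum>i\<in>A. \<bar>real (X i \<omega>) / m1 - real (Y i \<omega>) / m2\<bar>)"
  shows "(\<Sum>i\<in>A. \<bar>p i - q i\<bar>) \<le> (\<integral>\<omega>. V \<omega> \<partial>M)
    \<and> (\<integral>\<omega>. V \<omega> \<partial>M) \<le> (\<Sum>i\<in>A. \<bar>p i - q i\<bar>) + sqrt (real (card A) / m1 + real (card A) / m2)
    \<and> (\<Sum>i\<in>A. \<bar>p i - q i\<bar>) + sqrt (real (card A) / m1 + real (card A) / m2)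
           \<le> (\<Sum>i\<in>A. \<bar>p i - q i\<bar>) + sqrt (2 * real (card A) / m2)
    \<and> (\<integral>\<omega>. (V \<omega> - (\<integral>\<omega>. V \<omega> \<partial>M))\<^sup>2 \<partial>M) \<le> 1 / m1 + 1 / m2"
proof -
  interpret prob_space M by (rule M)
  define Z where "Z = (\<lambda>i \<omega>. real (X i \<omega>) / m1 - real (Y i \<omega>) / m2)"
  have V_eq: "V = (\<lambda>\<omega>. \<Sum>i\<in>A. \<bar>Z i \<omega>\<bar>)"
    by (simp add: V_def Z_def)
  have Z_moments: "integrable M (Z i) \<and> integrable M (\<lambda>\<omega>. (Z i \<omega>)\<^sup>2) \<and>
      expectation (Z i) = p i - q i \<and> variance (Z i) = p i / m1 + q i / m2" if "i \<in> A" for i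
  proof -
    have i: "i < n" using that A by auto
    from scaled_difference_of_indep_poissons[OF indep_var_Inl_Inr[OF indep] X_distr[OF i] _ Y_distr[OF i], of m1 m2]
    show ?thesis using i p_nonneg[OF i] q_nonneg[OF i] m1 m2 by (simp add: Z_def power2_eq_square)
  qed
  have Z_indep: "indep_var borel (\<lambda>\<omega>. \<bar>Z i \<omega>\<bar>) borel (\<lambda>\<omega>. \<bar>Z j \<omega>\<bar>)"
    if "i \<in> A" "j \<in> A" "i \<noteq> j" for i j
    unfolding Z_def using that A
    by (intro indep_var_pairs_compose[OF indep, where g="\<lambda>x y. \<bar>real x / m1 - real y / m2\<bar>"])
      (auto, measurable)
  have finite_A: "finite A"
    using A finite_subset by blast
  have E_Z: "(\<Sum>i\<in>A. \<bar>expectation (Z i)\<bar>) = (\<Sum>i\<in>A. \<bar>p i - q i\<bar>)"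
    using Z_moments by (intro sum.cong refl) simp
  have "(\<Sum>i\<in>A. variance (Z i)) = (\<Sum>i\<in>A. p i / m1 + q i / m2)"
    using Z_moments by (intro sum.cong refl) blast
  also have "\<dots> = (\<Sum>i\<in>A. p i) / m1 + (\<Sum>i\<in>A. q i) / m2"
    by (simp add: sum.distrib sum_divide_distrib)
  also have "\<dots> \<le> 1 / m1 + 1 / m2"
    using sum_subset_le_one[OF p_nonneg p_sum A] sum_subset_le_one[OF q_nonneg q_sum A] m1 m2
    by (intro add_mono divide_right_mono) simp_all
  finally have var_Z: "(\<Sum>i\<in>A. variance (Z i)) \<le> 1 / m1 + 1 / m2" .
  then have "card A * (\<Sum>i\<in>A. variance (Z i)) \<le> card A / m1 + card A / m2"
    using mult_left_mono[OF var_Z, of "card A"] by (simp add: distrib_left)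
  moreover have "card A / m1 \<le> card A / m2"
    using m1 m2 m12 by (simp add: divide_left_mono)
  moreover note sum_abs_indep_bounds[OF finite_A, of Z]
  ultimately show ?thesis
    unfolding V_eq E_Z[symmetric] using Z_moments Z_indep var_Z
    by (auto intro: order.trans add_left_mono)
qed

end
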